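(* Under the standing assumptions of the context, let $F(h):=\alpha Lh+\alpha_p\Delta_p(h)+\nabla\psi(h)$ and, for $s\in\mathbb{R}^N$, let $h^\star(s)$ denote a solution of $F(h)=s$. Then for all $s_1,s_2\in\mathbb{R}^N$, \[ \|h^\star(s_1)-h^\star(s_2)\|_2\le\frac1\mu\|s_1-s_2\|_2 . \]
   Context: $G$ is a connected undirected weighted graph on $N$ nodes with symmetric weights $W_{ij}\ge0$, $W_{ii}=0$; $L=D-W$ with $D=\mathrm{diag}(\sum_jW_{ij})$. For $p\in[2,\infty)$, $(\Delta_p(h))_i=\sum_jW_{ij}|h_i-h_j|^{p-2}(h_i-h_j)$. Standing assumptions: $p\in[2,\infty)$; $\alpha>0$, $\alpha_p\ge0$; $\psi:\mathbb{R}^N\to\mathbb{R}$ is $C^1$ and $\mu$-strongly convex with $\mu>0$: $\langle\nabla\psi(x)-\nabla\psi(y),x-y\rangle\ge\mu\|x-y\|_2^2$. *)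

theory Defs
  imports "HOL-Analysis.Analysis"
begin

text \<open>Graphs on N nodes: nodes are the elements of a finite type 'n (N = CARD('n)),
  weights are a matrix W :: real^'n^'n, vectors in R^N are real^'n.\<close>

definition weight_graph_ok :: "real^'n::finite^'n \<Rightarrow> bool" where
  "weight_graph_ok W \<longleftrightarrow>
     (\<forall>i j. W$i$j = W$j$i) \<and> (\<forall>i j. W$i$j \<ge> 0) \<and> (\<forall>i. W$i$i = 0)"

definition graph_connected :: "real^'n::finite^'n \<Rightarrow> bool" where
  "graph_connected W \<longleftrightarrow> (\<forall>i j. (\<lambda>a b. W$a$b > 0)\<^sup>*\<^sup>* i j)"

definition degree_matrix :: "real^'n::finite^'n \<Rightarrow> real^'n^'n" where
  "degree_matrix W = (\<chi> i j. if i = j then (\<Sum>k\<in>UNIV. W$i$k) else 0)"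

definition graph_laplacian :: "real^'n::finite^'n \<Rightarrow> real^'n^'n" where
  "graph_laplacian W = degree_matrix W - W"

text \<open>Graph p-Laplacian: (Delta_p h)_i = sum_j W_ij |h_i-h_j|^(p-2) (h_i-h_j).
  For p = 2 and h_i = h_j the Isabelle convention 0 powr 0 = 0 is harmless, since
  the term is multiplied by h_i - h_j = 0.\<close>
definition p_laplacian :: "real^'n::finite^'n \<Rightarrow> real \<Rightarrow> real^'n \<Rightarrow> real^'n" where
  "p_laplacian W p h = (\<chi> i. \<Sum>j\<in>UNIV. W$i$j * \<bar>h$i - h$j\<bar> powr (p - 2) * (h$i - h$j))"

definition F_op :: "real^'n::finite^'n \<Rightarrow> real \<Rightarrow> real \<Rightarrow> real \<Rightarrow> (real^'n \<Rightarrow> real^'n) \<Rightarrow> real^'n \<Rightarrow> real^'n" where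
  "F_op W p \<alpha> \<alpha>p grad h = \<alpha> *\<^sub>R (graph_laplacian W *v h) + \<alpha>p *\<^sub>R p_laplacian W p h + grad h"

end

theory Submission
  imports Defs
begin

text \<open>Both graph Laplacians are edge operators
  \<open>(A h)\<^sub>i = \<Sum>\<^sub>j W\<^sub>i\<^sub>j \<phi>(h\<^sub>i - h\<^sub>j)\<close> with \<open>\<phi>\<close> odd and nondecreasing.
  Summation by parts over the edges turns \<open>\<langle>A x - A y, x - y\<rangle>\<close> into
  \<open>\<onehalf> \<Sum>\<^sub>i\<^sub>j W\<^sub>i\<^sub>j (\<phi> a - \<phi> b)(a - b)\<close> with \<open>a = x\<^sub>i - x\<^sub>j\<close>, \<open>b = y\<^sub>i - y\<^sub>j\<close>,
  which is nonnegative, so \<open>\<alpha>L + \<alpha>\<^sub>p\<Delta>\<^sub>p\<close> is a monotone operator. Adding the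
  \<open>\<mu>\<close>-strongly monotone \<open>\<nabla>\<psi>\<close> makes \<open>F\<close> \<open>\<mu>\<close>-strongly monotone, whence
  \<open>\<mu>\<parallel>h\<^sub>1 - h\<^sub>2\<parallel>\<^sup>2 \<le> \<langle>s\<^sub>1 - s\<^sub>2, h\<^sub>1 - h\<^sub>2\<rangle> \<le> \<parallel>s\<^sub>1 - s\<^sub>2\<parallel> \<parallel>h\<^sub>1 - h\<^sub>2\<parallel>\<close>.\<close>

definition edge_operator :: "real^'n::finite^'n \<Rightarrow> (real \<Rightarrow> real) \<Rightarrow> real^'n \<Rightarrow> real^'n" where
  "edge_operator W \<phi> h = (\<chi> i. \<Sum>j\<in>UNIV. W$i$j * \<phi> (h$i - h$j))"

lemma graph_laplacian_eq_edge_operator: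
  "graph_laplacian W *v h = edge_operator W id h"
proof -
  have "(graph_laplacian W *v h) $ i = (\<Sum>j\<in>UNIV. W$i$j * (h$i - h$j))" for i
  proof -
    have "(graph_laplacian W *v h) $ i
        = (\<Sum>j\<in>UNIV. (if i = j then (\<Sum>k\<in>UNIV. W$i$k) else 0) * h$j) - (\<Sum>j\<in>UNIV. W$i$j * h$j)"
      by (simp add: matrix_vector_mult_def graph_laplacian_def degree_matrix_def
          left_diff_distrib sum_subtractf)
    also have "(\<Sum>j\<in>UNIV. (if i = j then (\<Sum>k\<in>UNIV. W$i$k) else 0) * h$j) = (\<Sum>k\<in>UNIV. W$i$k) * h$i"
      by (simp add: if_distrib[where f="\<lambda>c. c * _"] cong: if_cong)
    also have "(\<Sum>k\<in>UNIV. W$i$k) * h$i - (\<Sum>j\<in>UNIV. W$i$j * h$j) = (\<Sum>j\<in>UNIV. W$i$j * (h$i - h$j))"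
      by (simp add: sum_distrib_right right_diff_distrib sum_subtractf)
    finally show ?thesis .
  qed
  then show ?thesis by (simp add: edge_operator_def vec_eq_iff)
qed

lemma p_laplacian_eq_edge_operator:
  "p_laplacian W p h = edge_operator W (\<lambda>t. \<bar>t\<bar> powr (p - 2) * t) h"
  by (simp add: p_laplacian_def edge_operator_def mult.assoc)

lemma signed_powr_mono:
  assumes "p \<ge> 2"
  shows "mono (\<lambda>t::real. \<bar>t\<bar> powr (p - 2) * t)"
proof (rule monoI)
  have nonneg: "a powr (p - 2) * a \<le> b powr (p - 2) * b" if "0 \<le> a" "a \<le> b" for a b :: real
    using that assms by (intro mult_mono powr_mono2) auto
  fix x y :: real
  assume "x \<le> y"
  then consider "0 \<le> x" | "x < 0" "0 \<le> y" | "y < 0"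
    by linarith
  then show "\<bar>x\<bar> powr (p - 2) * x \<le> \<bar>y\<bar> powr (p - 2) * y"
  proof cases
    case 1
    then show ?thesis using nonneg[of x y] \<open>x \<le> y\<close> by simp
  next
    case 2
    then show ?thesis by (simp add: mult_nonneg_nonpos order_trans[of _ 0])
  next
    case 3
    then show ?thesis using nonneg[of "-y" "-x"] \<open>x \<le> y\<close> by simp
  qed
qed

lemma mono_diff_mult_nonneg:
  fixes \<phi> :: "real \<Rightarrow> real"
  assumes "mono \<phi>"
  shows "0 \<le> (\<phi> a - \<phi> b) * (a - b)"
proof (cases "a \<le> b")
  case True
  then have "\<phi> a \<le> \<phi> b" by (rule monoD[OF assms])
  with True show ?thesis by (simp add: mult_nonpos_nonpos)
next
  case False
  then have "\<phi> b \<le> \<phi> a" by (intro monoD[OF assms]) simp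
  with False show ?thesis by simp
qed

lemma graph_sum_by_parts:
  fixes W :: "real^'n::finite^'n"
  assumes sym: "\<And>i j. W$i$j = W$j$i" and antisym: "\<And>i j. f i j = - f j i"
  shows "(\<Sum>i\<in>UNIV. (\<Sum>j\<in>UNIV. W$i$j * f i j) * d i)
       = (1/2) * (\<Sum>i\<in>UNIV. \<Sum>j\<in>UNIV. W$i$j * f i j * (d i - d j))"
proof -
  have swap: "(\<Sum>i\<in>UNIV. \<Sum>j\<in>UNIV. W$i$j * f i j * d i)
      = - (\<Sum>i\<in>UNIV. \<Sum>j\<in>UNIV. W$i$j * f i j * d j)"
  proof -
    have "W$j$i * f j i * d j = - (W$i$j * f i j * d j)" for i j
      using sym[of j i] antisym[of j i] by simp
    then show ?thesis
      by (subst sum.swap) (simp only: sum_negf)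
  qed
  have "(\<Sum>i\<in>UNIV. \<Sum>j\<in>UNIV. W$i$j * f i j * (d i - d j))
      = (\<Sum>i\<in>UNIV. \<Sum>j\<in>UNIV. W$i$j * f i j * d i) - (\<Sum>i\<in>UNIV. \<Sum>j\<in>UNIV. W$i$j * f i j * d j)"
    by (simp add: right_diff_distrib sum_subtractf)
  then show ?thesis
    using swap by (simp add: sum_distrib_right)
qed

lemma edge_operator_monotone:
  fixes W :: "real^'n::finite^'n"
  assumes sym: "\<And>i j. W$i$j = W$j$i" and nonneg: "\<And>i j. W$i$j \<ge> 0"
    and odd: "\<And>t. \<phi> (- t) = - \<phi> t" and "mono \<phi>"
  shows "0 \<le> (edge_operator W \<phi> x - edge_operator W \<phi> y) \<bullet> (x - y)"
proof -
  define g where "g i j = \<phi> (x$i - x$j) - \<phi> (y$i - y$j)" for i j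
  have antisym: "g i j = - g j i" for i j
    using odd[of "x$i - x$j"] odd[of "y$i - y$j"] by (simp add: g_def)
  have edge_term: "0 \<le> W$i$j * g i j * ((x - y)$i - (x - y)$j)" for i j
  proof -
    have "g i j * ((x - y)$i - (x - y)$j)
        = (\<phi> (x$i - x$j) - \<phi> (y$i - y$j)) * ((x$i - x$j) - (y$i - y$j))"
      by (simp add: g_def algebra_simps)
    then have "0 \<le> g i j * ((x - y)$i - (x - y)$j)"
      using mono_diff_mult_nonneg[OF \<open>mono \<phi>\<close>] by simp
    then show ?thesis
      using nonneg[of i j] by (simp add: mult.assoc)
  qed
  have "(edge_operator W \<phi> x - edge_operator W \<phi> y) \<bullet> (x - y)
      = (\<Sum>i\<in>UNIV. (\<Sum>j\<in>UNIV. W$i$j * g i j) * (x - y)$i)"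
    by (simp add: inner_vec_def edge_operator_def g_def right_diff_distrib sum_subtractf)
  also have "\<dots> = (1/2) * (\<Sum>i\<in>UNIV. \<Sum>j\<in>UNIV. W$i$j * g i j * ((x - y)$i - (x - y)$j))"
    by (rule graph_sum_by_parts[OF sym antisym])
  also have "\<dots> \<ge> 0"
    using edge_term by (simp add: sum_nonneg)
  finally show ?thesis .
qed

lemma strongly_monotone_inverse_lipschitz:
  fixes G :: "'a::real_inner \<Rightarrow> 'a"
  assumes "\<mu> > 0" and "\<mu> * (norm (x - y))\<^sup>2 \<le> (G x - G y) \<bullet> (x - y)"
  shows "norm (x - y) \<le> (1 / \<mu>) * norm (G x - G y)"
proof -
  have "\<mu> * (norm (x - y))\<^sup>2 \<le> norm (G x - G y) * norm (x - y)"
    using assms(2) norm_cauchy_schwarz order_trans by blast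
  then have "\<mu> * norm (x - y) \<le> norm (G x - G y)"
    by (cases "x = y") (auto simp: power2_eq_square)
  then show ?thesis
    using assms(1) by (simp add: field_simps)
qed

theorem mainTheorem10:
  fixes W :: "real^'n::finite^'n"
    and p \<alpha> \<alpha>p \<mu> :: real
    and \<psi> :: "real^'n \<Rightarrow> real"
    and grad :: "real^'n \<Rightarrow> real^'n"
    and s1 s2 h1 h2 :: "real^'n"
  assumes W: "weight_graph_ok W"
    and conn: "graph_connected W"
    and p: "p \<ge> 2"
    and alpha: "\<alpha> > 0" and alphap: "\<alpha>p \<ge> 0"
    and grad: "\<And>x. (\<psi> has_derivative (\<lambda>v. grad x \<bullet> v)) (at x)"
    and C1: "continuous_on UNIV grad"
    and mu: "\<mu> > 0"
    and strong: "\<And>x y. (grad x - grad y) \<bullet> (x - y) \<ge> \<mu> * (norm (x - y))\<^sup>2"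
    and sol1: "F_op W p \<alpha> \<alpha>p grad h1 = s1"
    and sol2: "F_op W p \<alpha> \<alpha>p grad h2 = s2"
  shows "norm (h1 - h2) \<le> (1 / \<mu>) * norm (s1 - s2)"
proof -
  have sym: "\<And>i j. W$i$j = W$j$i" and nonneg: "\<And>i j. W$i$j \<ge> 0"
    using W by (auto simp: weight_graph_ok_def)
  let ?d = "h1 - h2"
  have laplacian: "0 \<le> (graph_laplacian W *v h1 - graph_laplacian W *v h2) \<bullet> ?d"
    unfolding graph_laplacian_eq_edge_operator
    by (rule edge_operator_monotone[OF sym nonneg]) (auto intro: monoI)
  have p_laplacian: "0 \<le> (p_laplacian W p h1 - p_laplacian W p h2) \<bullet> ?d"
    unfolding p_laplacian_eq_edge_operator
    by (rule edge_operator_monotone[OF sym nonneg _ signed_powr_mono[OF p]]) simp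
  have "(F_op W p \<alpha> \<alpha>p grad h1 - F_op W p \<alpha> \<alpha>p grad h2) \<bullet> ?d
      = \<alpha> * ((graph_laplacian W *v h1 - graph_laplacian W *v h2) \<bullet> ?d)
        + \<alpha>p * ((p_laplacian W p h1 - p_laplacian W p h2) \<bullet> ?d) + (grad h1 - grad h2) \<bullet> ?d"
    by (simp add: F_op_def algebra_simps inner_diff_left)
  also have "\<dots> \<ge> \<mu> * (norm ?d)\<^sup>2"
    using alpha alphap laplacian p_laplacian strong[of h1 h2] by (simp add: add_increasing)
  finally show ?thesis
    using strongly_monotone_inverse_lipschitz[OF mu] sol1 sol2 by blast
qed

end
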